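(* For all integers $n\ge1$, $\Delta_1(n)=0$. For all integers $\ell>1$: $\Delta_\ell(1)<0$ and $\Delta_\ell(2)>0$. Moreover $\Delta_\ell(3)<0$ for $2\le\ell\le 13$ and $\Delta_\ell(3)>0$ for $\ell\ge 14$.
   Context: For integers $n\geq 0$ let $S_n$ be the symmetric group on $n$ elements ($S_0$ trivial). For an integer $\ell\geq 1$ let $C_{\ell,n}=\{(\pi_1,\dots,\pi_\ell)\in S_n^\ell : \pi_j\pi_k=\pi_k\pi_j \text{ for all } 1\le j,k\le \ell\}$ and $N_\ell(n)=|C_{\ell,n}|/|S_n|$ (so $N_\ell(0)=1$). Define $\Delta_\ell(n)=N_\ell(n)^2-N_\ell(n-1)N_\ell(n+1)$ for $n\geq 1$. *)

theory Defs
  imports Complex_Main "HOL-Library.FuncSet" "HOL-Combinatorics.Permutations"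
begin

definition sym_grp :: "nat \<Rightarrow> (nat \<Rightarrow> nat) set" where
  "sym_grp n = {p. p permutes {..<n}}"

definition comm_tuples :: "nat \<Rightarrow> nat \<Rightarrow> (nat \<Rightarrow> nat \<Rightarrow> nat) set" where
  "comm_tuples l n = {ps \<in> {..<l} \<rightarrow>\<^sub>E sym_grp n.
      \<forall>j<l. \<forall>k<l. ps j \<circ> ps k = ps k \<circ> ps j}"

definition N_comm :: "nat \<Rightarrow> nat \<Rightarrow> real" where
  "N_comm l n = real (card (comm_tuples l n)) / real (card (sym_grp n))"

definition Delta_comm :: "nat \<Rightarrow> nat \<Rightarrow> real" where
  "Delta_comm l n = (N_comm l n)^2 - N_comm l (n - 1) * N_comm l (n + 1)"

end

theory Submission
  imports Defs "HOL-Combinatorics.Multiset_Permutations"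
begin

text \<open>
  For \<open>n \<le> 2\<close> the group \<open>S\<^sub>n\<close> is abelian, so \<open>N\<^sub>\<ell>(n) = n!\<^bsup>\<ell>-1\<^esup>\<close>. For \<open>n = 3, 4\<close> every
  commuting tuple generates an abelian subgroup, hence lies in a maximal abelian subgroup \<open>A\<close>,
  so \<open>C\<^sub>\<ell>\<^sub>,\<^sub>n\<close> is the union of the sets \<open>A\<^sup>\<ell>\<close>. Listing the maximal abelian subgroups so that
  each meets the union of its predecessors in a single subgroup \<open>B\<close>, the union is counted by
  adding \<open>|A|\<^sup>\<ell> - |B|\<^sup>\<ell>\<close> for each \<open>A\<close>. This gives
  \<open>6 N\<^sub>\<ell>(3) = 3\<^sup>\<ell> + 3\<cdot>2\<^sup>\<ell> - 3\<close> and \<open>24 N\<^sub>\<ell>(4) = 7\<cdot>4\<^sup>\<ell> + 4\<cdot>3\<^sup>\<ell> - 6\<cdot>2\<^sup>\<ell> - 4\<close>, and the signs of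
  \<open>\<Delta>\<^sub>\<ell>(1), \<Delta>\<^sub>\<ell>(2), \<Delta>\<^sub>\<ell>(3)\<close> reduce to inequalities between exponentials; the sign change of
  \<open>\<Delta>\<^sub>\<ell>(3)\<close> at \<open>\<ell> = 14\<close> comes from the competition of \<open>4\<cdot>9\<^sup>\<ell>\<close> with \<open>21\<cdot>8\<^sup>\<ell>\<close>.
\<close>

text \<open>
  The hypotheses make \<open>T m\<close> the part of \<open>S m\<close> already covered by \<open>S 0, \<dots>, S (m - 1)\<close>,
  so \<open>I \<rightarrow>\<^sub>E S m\<close> adds exactly \<open>card (S m) ^ card I - card (T m) ^ card I\<close> new functions.
\<close>

lemma card_UN_PiE_nested:
  fixes S T :: "nat \<Rightarrow> 'a set"
  assumes I: "finite I" "I \<noteq> {}"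
    and fin: "\<And>k. k < M \<Longrightarrow> finite (S k)"
    and TS: "\<And>k. k < M \<Longrightarrow> T k \<subseteq> S k"
    and T0: "T 0 = {}"
    and overlap: "\<And>m k. m < M \<Longrightarrow> k < m \<Longrightarrow> S m \<inter> S k \<subseteq> T m"
    and attained: "\<And>m. m < M \<Longrightarrow> 0 < m \<Longrightarrow> \<exists>k<m. T m \<subseteq> S k"
  shows "card (\<Union>k<M. I \<rightarrow>\<^sub>E S k) = (\<Sum>k<M. card (S k) ^ card I - card (T k) ^ card I)"
proof -
  have step: "card (\<Union>k<Suc m. I \<rightarrow>\<^sub>E S k)
      = card (\<Union>k<m. I \<rightarrow>\<^sub>E S k) + (card (S m) ^ card I - card (T m) ^ card I)"
    if "m < M" for m
  proof -
    let ?A = "I \<rightarrow>\<^sub>E S m" and ?U = "\<Union>k<m. I \<rightarrow>\<^sub>E S k"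
    have "?A \<inter> ?U = I \<rightarrow>\<^sub>E T m"
    proof (cases "m = 0")
      case True
      then show ?thesis using T0 I PiE_eq_empty_iff[of I "\<lambda>_. {}"] by auto
    next
      case False
      then obtain k0 where "k0 < m" "T m \<subseteq> S k0" using attained \<open>m < M\<close> by blast
      have "?A \<inter> (I \<rightarrow>\<^sub>E S k) \<subseteq> I \<rightarrow>\<^sub>E T m" if "k < m" for k
        unfolding PiE_Int using overlap[OF \<open>m < M\<close> that] by (rule PiE_mono)
      then have "?A \<inter> ?U \<subseteq> I \<rightarrow>\<^sub>E T m" by blast
      moreover have "I \<rightarrow>\<^sub>E T m \<subseteq> ?A \<inter> (I \<rightarrow>\<^sub>E S k0)"
        unfolding PiE_Int using TS[OF \<open>m < M\<close>] \<open>T m \<subseteq> S k0\<close> by (intro PiE_mono) simp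
      then have "I \<rightarrow>\<^sub>E T m \<subseteq> ?A \<inter> ?U" using \<open>k0 < m\<close> by blast
      ultimately show ?thesis by (rule antisym)
    qed
    moreover have "finite ?A" "finite ?U"
      using fin \<open>m < M\<close> I by (simp_all add: finite_PiE)
    moreover have "card (T m) ^ card I \<le> card (S m) ^ card I"
      using card_mono[OF fin TS] \<open>m < M\<close> by (simp add: power_mono)
    ultimately show ?thesis
      using card_Un_Int[of ?A ?U] I by (simp add: lessThan_Suc card_PiE)
  qed
  have "card (\<Union>k<m. I \<rightarrow>\<^sub>E S k) = (\<Sum>k<m. card (S k) ^ card I - card (T k) ^ card I)"
    if "m \<le> M" for m
    using that by (induction m) (simp_all add: step)
  then show ?thesis by simp
qed

lemma comm_tuples_eq_UN_PiE:
  assumes "0 < M"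
    and sub: "\<And>k. k < M \<Longrightarrow> S k \<subseteq> sym_grp n"
    and comm: "\<And>k p q. k < M \<Longrightarrow> p \<in> S k \<Longrightarrow> q \<in> S k \<Longrightarrow> p \<circ> q = q \<circ> p"
    and centralizer: "\<And>p. p \<in> sym_grp n - S 0 \<Longrightarrow>
      \<exists>k<M. {q \<in> sym_grp n. p \<circ> q = q \<circ> p} \<subseteq> S k"
  shows "comm_tuples l n = (\<Union>k<M. {..<l} \<rightarrow>\<^sub>E S k)"
proof
  show "comm_tuples l n \<subseteq> (\<Union>k<M. {..<l} \<rightarrow>\<^sub>E S k)"
  proof
    fix ps assume "ps \<in> comm_tuples l n"
    then have ps: "ps \<in> {..<l} \<rightarrow>\<^sub>E sym_grp n"
      and ps_comm: "\<And>j k. j < l \<Longrightarrow> k < l \<Longrightarrow> ps j \<circ> ps k = ps k \<circ> ps j"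
      unfolding comm_tuples_def by auto
    show "ps \<in> (\<Union>k<M. {..<l} \<rightarrow>\<^sub>E S k)"
    proof (cases "\<forall>j<l. ps j \<in> S 0")
      case True
      then show ?thesis using ps \<open>0 < M\<close> by (auto simp: PiE_iff)
    next
      case False
      then obtain j where j: "j < l" "ps j \<in> sym_grp n - S 0"
        using ps by auto
      then obtain k where "k < M" and k: "{q \<in> sym_grp n. ps j \<circ> q = q \<circ> ps j} \<subseteq> S k"
        using centralizer by blast
      have "ps i \<in> S k" if "i < l" for i
        using k ps ps_comm[OF j(1) that] that by auto
      then show ?thesis using ps \<open>k < M\<close> by (auto simp: PiE_iff)
    qed
  qed
  show "(\<Union>k<M. {..<l} \<rightarrow>\<^sub>E S k) \<subseteq> comm_tuples l n"
  proof
    fix ps assume "ps \<in> (\<Union>k<M. {..<l} \<rightarrow>\<^sub>E S k)"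
    then obtain k where k: "k < M" "ps \<in> {..<l} \<rightarrow>\<^sub>E S k" by blast
    then have "ps \<in> {..<l} \<rightarrow>\<^sub>E sym_grp n"
      using PiE_mono[of "{..<l}" "\<lambda>_. S k" "\<lambda>_. sym_grp n"] sub by blast
    moreover have "ps i \<circ> ps j = ps j \<circ> ps i" if "i < l" "j < l" for i j
      using comm[OF k(1)] k(2) that by (simp add: PiE_iff)
    ultimately show "ps \<in> comm_tuples l n" by (simp add: comm_tuples_def)
  qed
qed

definition perm_of_list :: "nat list \<Rightarrow> nat \<Rightarrow> nat" where
  "perm_of_list xs i = (if i < length xs then xs ! i else i)"

lemma permutations_of_set_lessThanD:
  assumes "xs \<in> permutations_of_set {..<n}"
  shows "set xs = {..<n}" "distinct xs" "length xs = n"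
  using assms length_finite_permutations_of_set[OF assms] by (simp_all add: permutations_of_set_def)

lemma perm_of_list_permutes:
  assumes "xs \<in> permutations_of_set {..<n}"
  shows "perm_of_list xs permutes {..<n}"
proof (rule bij_imp_permutes)
  have xs: "set xs = {..<n}" "distinct xs" "length xs = n"
    using permutations_of_set_lessThanD[OF assms] by auto
  have "bij_betw ((!) xs) {..<n} {..<n}"
    using xs by (simp add: bij_betw_nth atLeast0LessThan[symmetric])
  then show "bij_betw (perm_of_list xs) {..<n} {..<n}"
    by (rule bij_betw_cong[THEN iffD1, rotated]) (simp add: perm_of_list_def xs)
  show "perm_of_list xs i = i" if "i \<notin> {..<n}" for i
    using that by (simp add: perm_of_list_def xs)
qed

lemma perm_of_list_map_permutes:
  assumes "p permutes {..<n}"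
  shows "map p [0..<n] \<in> permutations_of_set {..<n}" and "perm_of_list (map p [0..<n]) = p"
proof -
  have "inj_on p {0..<n}"
    using permutes_inj_on[OF assms] by (simp add: atLeast0LessThan)
  moreover have "p ` {0..<n} = {..<n}"
    using permutes_image[OF assms] by (simp add: atLeast0LessThan)
  ultimately show "map p [0..<n] \<in> permutations_of_set {..<n}"
    by (auto simp: permutations_of_set_def distinct_map)
  show "perm_of_list (map p [0..<n]) = p"
    using permutes_not_in[OF assms] by (auto simp: perm_of_list_def fun_eq_iff)
qed

lemma sym_grp_eq_image_perm_of_list:
  "sym_grp n = perm_of_list ` permutations_of_set {..<n}"
proof
  show "sym_grp n \<subseteq> perm_of_list ` permutations_of_set {..<n}"
    unfolding sym_grp_def using perm_of_list_map_permutes by (metis imageI mem_Collect_eq subsetI)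
  show "perm_of_list ` permutations_of_set {..<n} \<subseteq> sym_grp n"
    unfolding sym_grp_def using perm_of_list_permutes by blast
qed

lemma inj_on_perm_of_list: "inj_on perm_of_list {xs. length xs = n}"
proof (rule inj_onI)
  fix xs ys assume "xs \<in> {xs. length xs = n}" "ys \<in> {xs. length xs = n}"
    and eq: "perm_of_list xs = perm_of_list ys"
  then have len: "length xs = length ys" by simp
  show "xs = ys"
  proof (rule nth_equalityI[OF len])
    show "xs ! i = ys ! i" if "i < length xs" for i
      using fun_cong[OF eq, of i] that len by (simp add: perm_of_list_def)
  qed
qed

lemma perm_of_list_comp:
  assumes "xs \<in> permutations_of_set {..<n}" "ys \<in> permutations_of_set {..<n}"
  shows "perm_of_list (map ((!) xs) ys) = perm_of_list xs \<circ> perm_of_list ys"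
proof -
  have "set ys = {..<n}" "length xs = n" "length ys = n"
    using permutations_of_set_lessThanD assms by auto
  then have "ys ! i < length xs" if "i < length ys" for i
    using that nth_mem by fastforce
  then show ?thesis
    using \<open>length xs = n\<close> \<open>length ys = n\<close> by (auto simp: perm_of_list_def fun_eq_iff)
qed

definition lists_commute :: "nat list \<Rightarrow> nat list \<Rightarrow> bool" where
  "lists_commute xs ys \<longleftrightarrow> map ((!) xs) ys = map ((!) ys) xs"

lemma perm_of_list_commute_iff:
  assumes "xs \<in> permutations_of_set {..<n}" "ys \<in> permutations_of_set {..<n}"
  shows "perm_of_list xs \<circ> perm_of_list ys = perm_of_list ys \<circ> perm_of_list xs
    \<longleftrightarrow> lists_commute xs ys"
proof -
  have "length xs = n" "length ys = n"
    using permutations_of_set_lessThanD assms by auto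
  then have inj: "inj_on perm_of_list {map ((!) xs) ys, map ((!) ys) xs}"
    by (intro inj_on_subset[OF inj_on_perm_of_list[of n]]) auto
  then show ?thesis
    unfolding lists_commute_def perm_of_list_comp[OF assms, symmetric]
      perm_of_list_comp[OF assms(2,1), symmetric]
    using inj_on_eq_iff[OF inj, of "map ((!) xs) ys" "map ((!) ys) xs"] by simp
qed

definition commuting_cover :: "nat \<Rightarrow> nat list list list \<Rightarrow> bool" where
  "commuting_cover n fam \<longleftrightarrow> fam \<noteq> [] \<and>
    (\<forall>F\<in>set fam. set F \<subseteq> permutations_of_set {..<n} \<and>
      (\<forall>xs\<in>set F. \<forall>ys\<in>set F. lists_commute xs ys)) \<and>
    (\<forall>xs\<in>permutations_of_set {..<n} - set (hd fam). \<exists>F\<in>set fam.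
      \<forall>ys\<in>permutations_of_set {..<n}. lists_commute xs ys \<longrightarrow> ys \<in> set F)"

definition nested_overlaps :: "nat list list list \<Rightarrow> nat list list list \<Rightarrow> bool" where
  "nested_overlaps fam ovl \<longleftrightarrow> length ovl = length fam \<and> hd ovl = [] \<and>
    (\<forall>m<length fam. distinct (fam ! m) \<and> distinct (ovl ! m) \<and> set (ovl ! m) \<subseteq> set (fam ! m) \<and>
      (\<forall>k<m. set (fam ! m) \<inter> set (fam ! k) \<subseteq> set (ovl ! m)) \<and>
      (0 < m \<longrightarrow> (\<exists>k<m. set (ovl ! m) \<subseteq> set (fam ! k))))"

lemma comm_tuples_eq_UN_commuting_cover:
  assumes "commuting_cover n fam"
  shows "comm_tuples l n = (\<Union>k<length fam. {..<l} \<rightarrow>\<^sub>E perm_of_list ` set (fam ! k))"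
proof (rule comm_tuples_eq_UN_PiE)
  have fam: "fam \<noteq> []" "\<And>k. k < length fam \<Longrightarrow> set (fam ! k) \<subseteq> permutations_of_set {..<n}"
    "\<And>k xs ys. k < length fam \<Longrightarrow> xs \<in> set (fam ! k) \<Longrightarrow> ys \<in> set (fam ! k) \<Longrightarrow> lists_commute xs ys"
    using assms nth_mem unfolding commuting_cover_def by blast+
  then show "0 < length fam" by simp
  show "perm_of_list ` set (fam ! k) \<subseteq> sym_grp n" if "k < length fam" for k
    using fam(2)[OF that] by (auto simp: sym_grp_eq_image_perm_of_list)
  show "p \<circ> q = q \<circ> p"
    if "k < length fam" "p \<in> perm_of_list ` set (fam ! k)" "q \<in> perm_of_list ` set (fam ! k)" for k p q
    using that fam(2,3)[OF that(1)] perm_of_list_commute_iff by blast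
  show "\<exists>k<length fam. {q \<in> sym_grp n. p \<circ> q = q \<circ> p} \<subseteq> perm_of_list ` set (fam ! k)"
    if p: "p \<in> sym_grp n - perm_of_list ` set (fam ! 0)" for p
  proof -
    obtain xs where xs: "xs \<in> permutations_of_set {..<n}" "p = perm_of_list xs" "xs \<notin> set (hd fam)"
      using p fam(1) by (auto simp: sym_grp_eq_image_perm_of_list hd_conv_nth)
    then obtain F where "F \<in> set fam"
      and F: "\<And>ys. ys \<in> permutations_of_set {..<n} \<Longrightarrow> lists_commute xs ys \<Longrightarrow> ys \<in> set F"
      using assms unfolding commuting_cover_def by blast
    then obtain k where "k < length fam" "F = fam ! k" by (auto simp: in_set_conv_nth)
    moreover have "{q \<in> sym_grp n. p \<circ> q = q \<circ> p} \<subseteq> perm_of_list ` set F"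
      using xs F perm_of_list_commute_iff by (fastforce simp: sym_grp_eq_image_perm_of_list)
    ultimately show ?thesis by blast
  qed
qed

lemma nested_overlapsD:
  assumes "nested_overlaps fam ovl" "m < length fam"
  shows "distinct (fam ! m)" "distinct (ovl ! m)" "set (ovl ! m) \<subseteq> set (fam ! m)"
    "\<And>k. k < m \<Longrightarrow> set (fam ! m) \<inter> set (fam ! k) \<subseteq> set (ovl ! m)"
    "0 < m \<Longrightarrow> \<exists>k<m. set (ovl ! m) \<subseteq> set (fam ! k)"
  using assms unfolding nested_overlaps_def by auto

lemma card_image_perm_of_list:
  assumes "set F \<subseteq> {xs. length xs = n}" "distinct F"
  shows "card (perm_of_list ` set F) = length F"
  using assms inj_on_subset[OF inj_on_perm_of_list] by (simp add: card_image distinct_card)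

lemma card_comm_tuples_commuting_cover:
  assumes cover: "commuting_cover n fam" and ovl: "nested_overlaps fam ovl" and "0 < l"
  shows "real (card (comm_tuples l n))
    = (\<Sum>(F, T)\<leftarrow>zip fam ovl. real (length F) ^ l - real (length T) ^ l)"
proof -
  define S where "S k = perm_of_list ` set (fam ! k)" for k
  define T where "T k = perm_of_list ` set (ovl ! k)" for k
  have "length ovl = length fam" "hd ovl = []" "fam \<noteq> []"
    using cover ovl unfolding commuting_cover_def nested_overlaps_def by auto
  then have "ovl ! 0 = []" by (metis hd_conv_nth length_0_conv)
  have fam_lists: "set (fam ! k) \<subseteq> {xs. length xs = n}" if "k < length fam" for k
    using cover nth_mem[OF that] permutations_of_set_lessThanD
    unfolding commuting_cover_def by blast
  then have ovl_lists: "set (ovl ! k) \<subseteq> {xs. length xs = n}" if "k < length fam" for k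
    using nested_overlapsD(3)[OF ovl that] that by blast
  have "card (comm_tuples l n) = card (\<Union>k<length fam. {..<l} \<rightarrow>\<^sub>E S k)"
    unfolding S_def comm_tuples_eq_UN_commuting_cover[OF cover] ..
  also have "\<dots> = (\<Sum>k<length fam. card (S k) ^ card {..<l} - card (T k) ^ card {..<l})"
  proof (rule card_UN_PiE_nested)
    show "S m \<inter> S k \<subseteq> T m" if "m < length fam" "k < m" for m k
      using nested_overlapsD(4)[OF ovl that] that
        inj_on_image_Int[OF inj_on_perm_of_list fam_lists fam_lists, of m k]
      unfolding S_def T_def by (metis image_mono order.strict_trans)
    show "\<exists>k<m. T m \<subseteq> S k" if "m < length fam" "0 < m" for m
      using nested_overlapsD(5)[OF ovl that] unfolding S_def T_def by (meson image_mono)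
  qed (use \<open>0 < l\<close> \<open>ovl ! 0 = []\<close> nested_overlapsD[OF ovl] in
    \<open>auto simp: S_def T_def image_mono\<close>)
  also have "\<dots> = (\<Sum>k<length fam. length (fam ! k) ^ l - length (ovl ! k) ^ l)"
    using card_image_perm_of_list[OF fam_lists nested_overlapsD(1)[OF ovl]]
      card_image_perm_of_list[OF ovl_lists nested_overlapsD(2)[OF ovl]]
    by (simp add: S_def T_def)
  also have "real \<dots> = (\<Sum>k<length fam. real (length (fam ! k)) ^ l - real (length (ovl ! k)) ^ l)"
  proof -
    have "length (ovl ! k) \<le> length (fam ! k)" if "k < length fam" for k
      using card_mono[OF finite_set nested_overlapsD(3)[OF ovl that]]
      by (simp add: distinct_card nested_overlapsD(1,2)[OF ovl that])
    then show ?thesis by (simp add: of_nat_diff power_mono)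
  qed
  also have "\<dots> = (\<Sum>(F, T)\<leftarrow>zip fam ovl. real (length F) ^ l - real (length T) ^ l)"
    by (simp add: sum_list_sum_nth atLeast0LessThan \<open>length ovl = length fam\<close>)
  finally show ?thesis .
qed

lemma card_sym_grp: "card (sym_grp n) = fact n"
  unfolding sym_grp_def by (simp add: card_permutations)

lemma N_comm_one_left: "N_comm 1 n = 1"
proof -
  have "comm_tuples 1 n = {..<1} \<rightarrow>\<^sub>E sym_grp n"
    unfolding comm_tuples_def by auto
  then show ?thesis
    unfolding N_comm_def by (simp add: card_PiE card_sym_grp)
qed

lemma sym_grp_commute_le_2:
  assumes "n \<le> 2" "p \<in> sym_grp n" "q \<in> sym_grp n"
  shows "p \<circ> q = q \<circ> p"
proof -
  have "n = 0 \<or> n = 1 \<or> n = 2" using assms(1) by auto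
  then have "\<forall>xs\<in>permutations_of_set {..<n}. \<forall>ys\<in>permutations_of_set {..<n}. lists_commute xs ys"
    by (elim disjE) (hypsubst, code_simp)+
  then show ?thesis
    using assms(2,3) perm_of_list_commute_iff by (auto simp: sym_grp_eq_image_perm_of_list)
qed

lemma N_comm_le_2:
  assumes "n \<le> 2"
  shows "N_comm l n = fact n ^ l / fact n"
proof -
  have "ps j \<circ> ps k = ps k \<circ> ps j" if "ps \<in> {..<l} \<rightarrow>\<^sub>E sym_grp n" "j < l" "k < l" for ps j k
    using that by (intro sym_grp_commute_le_2[OF assms]) auto
  then have "comm_tuples l n = {..<l} \<rightarrow>\<^sub>E sym_grp n"
    unfolding comm_tuples_def by blast
  then show ?thesis
    unfolding N_comm_def by (simp add: card_PiE card_sym_grp)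
qed

text \<open>The maximal abelian subgroups of \<open>S\<^sub>3\<close>: \<open>A\<^sub>3\<close> and the three subgroups generated by a transposition.\<close>

definition abelian_cover_3 :: "nat list list list" where
  "abelian_cover_3 = [[[0,1,2],[1,2,0],[2,0,1]], [[0,1,2],[1,0,2]], [[0,1,2],[2,1,0]], [[0,1,2],[0,2,1]]]"

definition overlaps_3 :: "nat list list list" where
  "overlaps_3 = [[], [[0,1,2]], [[0,1,2]], [[0,1,2]]]"

text \<open>
  The maximal abelian subgroups of \<open>S\<^sub>4\<close>: the normal Klein four-group, which must come first
  because a double transposition has a non-abelian (dihedral) centraliser, the other three
  Klein four-groups, the three cyclic subgroups of order 4 and the four of order 3.
\<close>

definition abelian_cover_4 :: "nat list list list" where
  "abelian_cover_4 = [
    [[0,1,2,3],[1,0,3,2],[2,3,0,1],[3,2,1,0]],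
    [[0,1,2,3],[1,0,2,3],[0,1,3,2],[1,0,3,2]],
    [[0,1,2,3],[2,1,0,3],[0,3,2,1],[2,3,0,1]],
    [[0,1,2,3],[3,1,2,0],[0,2,1,3],[3,2,1,0]],
    [[0,1,2,3],[2,3,1,0],[1,0,3,2],[3,2,0,1]],
    [[0,1,2,3],[1,2,3,0],[2,3,0,1],[3,0,1,2]],
    [[0,1,2,3],[1,3,0,2],[3,2,1,0],[2,0,3,1]],
    [[0,1,2,3],[1,2,0,3],[2,0,1,3]],
    [[0,1,2,3],[1,3,2,0],[3,0,2,1]],
    [[0,1,2,3],[2,1,3,0],[3,1,0,2]],
    [[0,1,2,3],[0,2,3,1],[0,3,1,2]]]"

definition overlaps_4 :: "nat list list list" where
  "overlaps_4 = [[], [[0,1,2,3],[1,0,3,2]], [[0,1,2,3],[2,3,0,1]], [[0,1,2,3],[3,2,1,0]],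
    [[0,1,2,3],[1,0,3,2]], [[0,1,2,3],[2,3,0,1]], [[0,1,2,3],[3,2,1,0]],
    [[0,1,2,3]], [[0,1,2,3]], [[0,1,2,3]], [[0,1,2,3]]]"

lemma card_comm_tuples_3:
  assumes "0 < l"
  shows "real (card (comm_tuples l 3)) = 3 ^ l + 3 * 2 ^ l - 3"
proof -
  have "commuting_cover 3 abelian_cover_3" "nested_overlaps abelian_cover_3 overlaps_3"
    by code_simp+
  then show ?thesis
    using card_comm_tuples_commuting_cover assms
    by (simp add: abelian_cover_3_def overlaps_3_def)
qed

lemma card_comm_tuples_4:
  assumes "0 < l"
  shows "real (card (comm_tuples l 4)) = 7 * 4 ^ l + 4 * 3 ^ l - 6 * 2 ^ l - 4"
proof -
  have "commuting_cover 4 abelian_cover_4" "nested_overlaps abelian_cover_4 overlaps_4"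
    by code_simp+
  then show ?thesis
    using card_comm_tuples_commuting_cover assms
    by (simp add: abelian_cover_4_def overlaps_4_def)
qed

lemma N_comm_small:
  assumes "0 < l"
  shows "N_comm l 0 = 1" "N_comm l 1 = 1" "N_comm l 2 = 2 ^ l / 2"
    "N_comm l 3 = (3 ^ l + 3 * 2 ^ l - 3) / 6"
    "N_comm l 4 = (7 * 4 ^ l + 4 * 3 ^ l - 6 * 2 ^ l - 4) / 24"
proof -
  have fact: "fact 2 = (2::real)" "fact 3 = (6::real)" "fact 4 = (24::real)"
    by (simp_all add: fact_numeral)
  show "N_comm l 0 = 1" "N_comm l 1 = 1" "N_comm l 2 = 2 ^ l / 2"
    using fact by (simp_all add: N_comm_le_2)
  show "N_comm l 3 = (3 ^ l + 3 * 2 ^ l - 3) / 6"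
    using fact by (simp add: N_comm_def card_sym_grp card_comm_tuples_3 assms)
  show "N_comm l 4 = (7 * 4 ^ l + 4 * 3 ^ l - 6 * 2 ^ l - 4) / 24"
    using fact by (simp add: N_comm_def card_sym_grp card_comm_tuples_4 assms)
qed

lemma Delta_comm_one_left: "Delta_comm 1 n = 0"
  unfolding Delta_comm_def N_comm_one_left by simp

lemma Delta_comm_1_neg:
  assumes "1 < l"
  shows "Delta_comm l 1 < 0"
proof -
  have "(1::nat) - 1 = 0" "(1::nat) + 1 = 2" by simp_all
  then have "Delta_comm l 1 = N_comm l 1 ^ 2 - N_comm l 0 * N_comm l 2"
    unfolding Delta_comm_def by (simp only:)
  moreover have "(4::real) \<le> 2 ^ l"
    using power_increasing[of 2 l "2::real"] assms by simp
  ultimately show ?thesis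
    using assms by (simp only: N_comm_small) simp
qed

lemma pow_3_pow_2_lt_pow_4:
  "2 \<le> l \<Longrightarrow> 2 * 3 ^ l + 6 * 2 ^ l < 3 * 4 ^ l + (6::real)"
proof (induction l rule: dec_induct)
  case (step k)
  have "(2::real) \<le> 2 ^ k" "(1::real) \<le> 3 ^ k"
    using power_increasing[of 1 k "2::real"] step(1) by simp_all
  then show ?case using step(3) by (simp; linarith)
qed simp

lemma Delta_comm_2_pos:
  assumes "1 < l"
  shows "Delta_comm l 2 > 0"
proof -
  have "(2::nat) - 1 = 1" "(2::nat) + 1 = 3" by simp_all
  then have "Delta_comm l 2 = N_comm l 2 ^ 2 - N_comm l 1 * N_comm l 3"
    unfolding Delta_comm_def by (simp only:)
  moreover have "(4::real) ^ l = 2 ^ l * 2 ^ l"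
    by (simp flip: power_mult_distrib)
  ultimately show ?thesis
    using pow_3_pow_2_lt_pow_4[of l] assms
    by (simp only: N_comm_small) (simp add: power2_eq_square field_simps)
qed

lemma Delta_comm_3:
  assumes "0 < l"
  shows "144 * Delta_comm l 3
    = 4 * 9 ^ l + 12 * 6 ^ l - 21 * 8 ^ l + 54 * 4 ^ l - 24 * 3 ^ l - 60 * 2 ^ l + 36"
proof -
  have "Delta_comm l 3 = N_comm l 3 ^ 2 - N_comm l 2 * N_comm l 4"
    by (simp add: Delta_comm_def)
  moreover have "(9::real) ^ l = 3 ^ l * 3 ^ l" "(6::real) ^ l = 3 ^ l * 2 ^ l"
    "(8::real) ^ l = 2 ^ l * 2 ^ l * 2 ^ l" "(4::real) ^ l = 2 ^ l * 2 ^ l"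
    by (simp_all flip: power_mult_distrib)
  ultimately show ?thesis
    using assms by (simp add: N_comm_small power2_eq_square field_simps)
qed

lemma Delta_comm_3_neg:
  assumes "2 \<le> l" "l \<le> 13"
  shows "Delta_comm l 3 < 0"
proof -
  have "\<forall>k\<in>set [2..<14].
      4 * 9 ^ k + 12 * 6 ^ k - 21 * 8 ^ k + 54 * 4 ^ k - 24 * 3 ^ k - 60 * 2 ^ k + 36 < (0::real)"
    by (simp add: upt_rec)
  moreover have "l \<in> set [2..<14]"
    using assms unfolding set_upt by simp
  ultimately show ?thesis
    using Delta_comm_3[of l] assms by fastforce
qed

lemma pow_6_le_pow_9: "5 \<le> l \<Longrightarrow> 6 * 6 ^ l \<le> (9::real) ^ l"
proof (induction l rule: dec_induct)
  case (step k)
  have "0 \<le> (6::real) ^ k" by simp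
  then show ?case using step(3) by (simp; linarith)
qed simp

lemma pow_3_pow_2_le_pow_9_6_8:
  "14 \<le> l \<Longrightarrow> 24 * 3 ^ l + 60 * 2 ^ l \<le> 4 * 9 ^ l + 12 * 6 ^ l - 21 * (8::real) ^ l"
proof (induction l rule: dec_induct)
  case (step k)
  \<comment> \<open>once \<open>6 * 6 ^ k \<le> 9 ^ k\<close>, the right side at least octuples from one step to the next\<close>
  have "6 * 6 ^ k \<le> (9::real) ^ k" using pow_6_le_pow_9 step(1) by simp
  moreover have "0 \<le> (3::real) ^ k" "0 \<le> (2::real) ^ k" "0 \<le> (6::real) ^ k" by simp_all
  ultimately show ?case using step(3) by (simp; linarith)
qed simp

lemma Delta_comm_3_pos:
  assumes "14 \<le> l"
  shows "Delta_comm l 3 > 0"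
proof -
  have "(0::real) < 4 ^ l" by simp
  then show ?thesis
    using Delta_comm_3[of l] pow_3_pow_2_le_pow_9_6_8[OF assms] assms by linarith
qed

theorem lemma2p1:
  shows "(\<forall>n::nat. n \<ge> 1 \<longrightarrow> Delta_comm 1 n = 0)
    \<and> (\<forall>l::nat. l > 1 \<longrightarrow> Delta_comm l 1 < 0 \<and> Delta_comm l 2 > 0)
    \<and> (\<forall>l::nat. 2 \<le> l \<and> l \<le> 13 \<longrightarrow> Delta_comm l 3 < 0)
    \<and> (\<forall>l::nat. l \<ge> 14 \<longrightarrow> Delta_comm l 3 > 0)"
  using Delta_comm_one_left Delta_comm_1_neg Delta_comm_2_pos Delta_comm_3_neg Delta_comm_3_pos
  by blast

end
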